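(* Suppose $\mathds{G}$ is an element-based (respectively set-based) generator that generates in the limit from every countable collection under enumerations without noise or omissions. Let $\mathcal{L}$ be a countable collection and let $\tilde{\mathcal{L}}=\{L\cup A\setminus B: L\in\mathcal{L},\ A\subseteq U\setminus L,\ B\subseteq L,\ |A|<\infty,\ |B|<\infty\}$. Suppose $x_{1:\infty}$ is an enumeration of some target language $K\in\mathcal{L}$ with finite noise and finite omissions. Then $\mathds{G}$ applied to the collection $\tilde{\mathcal{L}}$ generates from $K$ in the limit under the enumeration $x_{1:\infty}$.
   Context: The universe $U=\mathbb{N}$ is countable; a language is an infinite subset of $U$; a collection is a countable family of languages (note $\tilde{\mathcal{L}}$ is countable). An enumeration of $L$ without noise or omissions lists every element of $L$ exactly once and nothing else. An enumeration of $K$ with finite noise and finite omissions is a sequence of distinct elements listing every element of some $\hat K\subseteq K$ with $|K\setminus\hat K|<\infty$ together with only finitely many elements outside $\hat K$. An element-based generator outputs at step $n$ an element $w_n\notin\{x_1,\dots,x_n,w_1,\dots,w_{n-1}\}$; a set-based generator outputs $A_n\subseteq U\setminus\{x_1,\dots,x_n\}$. Generating in the limit from a language $T$ means $w_n\in T$ (resp. $A_n\subseteq T$) for all sufficiently large $n$; generating in the limit from a collection under a class of enumerations means doing so for every member $T$ of the collection and every enumeration of $T$ in the class. *)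

theory Defs
  imports Main "HOL-Library.Countable_Set"
begin

text \<open>Universe U = nat. A generator receives the collection and the
prefix x_1..x_n (a list of length n) and produces its output at step n.\<close>

type_synonym collection = "nat set set"

definition is_collection :: "collection \<Rightarrow> bool" where
  "is_collection C \<longleftrightarrow> countable C \<and> (\<forall>L\<in>C. infinite L)"

definition prefix :: "(nat \<Rightarrow> nat) \<Rightarrow> nat \<Rightarrow> nat list" where
  "prefix x n = map x [0..<n]"

text \<open>Enumeration of L without noise or omissions (x 0 is x_1).\<close>
definition clean_enum :: "(nat \<Rightarrow> nat) \<Rightarrow> nat set \<Rightarrow> bool" where
  "clean_enum x L \<longleftrightarrow> inj x \<and> range x = L"

definition noisy_enum :: "(nat \<Rightarrow> nat) \<Rightarrow> nat set \<Rightarrow> bool" where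
  "noisy_enum x K \<longleftrightarrow> inj x \<and>
     (\<exists>Khat. Khat \<subseteq> K \<and> finite (K - Khat) \<and> Khat \<subseteq> range x \<and> finite (range x - Khat))"

text \<open>Element-based generator: w_n avoids x_1..x_n and w_1..w_{n-1}.\<close>
definition element_based :: "(collection \<Rightarrow> nat list \<Rightarrow> nat) \<Rightarrow> bool" where
  "element_based G \<longleftrightarrow> (\<forall>C xs. xs \<noteq> [] \<longrightarrow>
      G C xs \<notin> set xs \<and> (\<forall>i. 0 < i \<and> i < length xs \<longrightarrow> G C xs \<noteq> G C (take i xs)))"

definition set_based :: "(collection \<Rightarrow> nat list \<Rightarrow> nat set) \<Rightarrow> bool" where
  "set_based G \<longleftrightarrow> (\<forall>C xs. xs \<noteq> [] \<longrightarrow> G C xs \<inter> set xs = {})"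

definition elem_generates :: "(collection \<Rightarrow> nat list \<Rightarrow> nat) \<Rightarrow> collection \<Rightarrow> nat set \<Rightarrow> (nat \<Rightarrow> nat) \<Rightarrow> bool" where
  "elem_generates G C T x \<longleftrightarrow> (\<exists>N. \<forall>n\<ge>N. G C (prefix x n) \<in> T)"

definition set_generates :: "(collection \<Rightarrow> nat list \<Rightarrow> nat set) \<Rightarrow> collection \<Rightarrow> nat set \<Rightarrow> (nat \<Rightarrow> nat) \<Rightarrow> bool" where
  "set_generates G C T x \<longleftrightarrow> (\<exists>N. \<forall>n\<ge>N. G C (prefix x n) \<subseteq> T)"

definition elem_generates_all_clean :: "(collection \<Rightarrow> nat list \<Rightarrow> nat) \<Rightarrow> bool" where
  "elem_generates_all_clean G \<longleftrightarrow> (\<forall>C. is_collection C \<longrightarrow>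
      (\<forall>T\<in>C. \<forall>x. clean_enum x T \<longrightarrow> elem_generates G C T x))"

definition set_generates_all_clean :: "(collection \<Rightarrow> nat list \<Rightarrow> nat set) \<Rightarrow> bool" where
  "set_generates_all_clean G \<longleftrightarrow> (\<forall>C. is_collection C \<longrightarrow>
      (\<forall>T\<in>C. \<forall>x. clean_enum x T \<longrightarrow> set_generates G C T x))"

definition perturb :: "collection \<Rightarrow> collection" where
  "perturb C = {(L \<union> A) - B | L A B. L \<in> C \<and> A \<subseteq> UNIV - L \<and> B \<subseteq> L \<and> finite A \<and> finite B}"

end

theory Submission
  imports Defs
begin

text \<open>A noisy enumeration x of K is a clean enumeration of its range, and range x differs
from K only in finitely many elements, so range x belongs to the perturbed collection.
Hence the generator, run on the perturbed collection, eventually outputs only elements of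
range x. The finitely many noise elements of range x - K all occur in the prefix from some
step on, and the generator never outputs an element of the prefix, so from then on its
output lies in K.\<close>

lemma is_collection_perturb:
  assumes "is_collection C"
  shows "is_collection (perturb C)"
proof -
  let ?Fin = "Collect finite :: nat set set"
  have "perturb C \<subseteq> (\<lambda>(L, A, B). (L \<union> A) - B) ` (C \<times> ?Fin \<times> ?Fin)"
    unfolding perturb_def by (auto simp: image_iff)
  moreover have "countable (C \<times> ?Fin \<times> ?Fin)"
    using assms countable_Collect_finite unfolding is_collection_def by blast
  ultimately have "countable (perturb C)"
    by (meson countable_image countable_subset)
  moreover have "infinite T" if "T \<in> perturb C" for T
  proof -
    from that obtain L A B where "T = (L \<union> A) - B" "L \<in> C" "finite B"
      unfolding perturb_def by blast
    moreover have "infinite L"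
      using assms \<open>L \<in> C\<close> unfolding is_collection_def by blast
    ultimately show ?thesis
      by (metis Diff_infinite_finite Diff_mono finite_subset order_refl sup_ge1)
  qed
  ultimately show ?thesis
    unfolding is_collection_def by blast
qed

lemma noisy_enum_finite_symdiff:
  assumes "noisy_enum x K"
  shows "finite (range x - K)" and "finite (K - range x)"
proof -
  obtain Khat where "Khat \<subseteq> K" "finite (K - Khat)" "Khat \<subseteq> range x" "finite (range x - Khat)"
    using assms unfolding noisy_enum_def by blast
  then show "finite (range x - K)" and "finite (K - range x)"
    by (meson Diff_mono finite_subset order_refl)+
qed

lemma clean_enum_range: "inj x \<Longrightarrow> clean_enum x (range x)"
  unfolding clean_enum_def by simp

lemma noisy_enum_range_in_perturb:
  assumes "K \<in> C" and "noisy_enum x K"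
  shows "range x \<in> perturb C"
proof -
  have "range x = (K \<union> (range x - K)) - (K - range x)"
    by blast
  then show ?thesis
    unfolding perturb_def using assms noisy_enum_finite_symdiff[OF assms(2)] by blast
qed

lemma eventually_subset_prefix:
  assumes "finite F" and "F \<subseteq> range x"
  shows "eventually (\<lambda>n. F \<subseteq> set (prefix x n)) sequentially"
proof -
  obtain f where f: "\<And>y. y \<in> F \<Longrightarrow> x (f y) = y"
    using assms(2) by (metis f_inv_into_f subsetD)
  let ?M = "Suc (Max (f ` F))"
  have "F \<subseteq> set (prefix x n)" if "?M \<le> n" for n
  proof
    fix y assume "y \<in> F"
    then have "f y \<le> Max (f ` F)"
      using assms(1) by simp
    then have "f y < n"
      using that by simp
    then show "y \<in> set (prefix x n)"
      using f[OF \<open>y \<in> F\<close>] unfolding prefix_def by force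
  qed
  then show ?thesis
    unfolding eventually_sequentially by blast
qed

lemma eventually_prefix_nonempty: "eventually (\<lambda>n. prefix x n \<noteq> []) sequentially"
  unfolding eventually_sequentially prefix_def by (intro exI[of _ 1]) auto

lemma eventually_noise_in_prefix:
  assumes "noisy_enum x K"
  shows "eventually (\<lambda>n. range x - K \<subseteq> set (prefix x n)) sequentially"
  using noisy_enum_finite_symdiff(1)[OF assms] by (rule eventually_subset_prefix) blast

lemma elem_generates_eventually:
  "elem_generates G C T x \<longleftrightarrow> eventually (\<lambda>n. G C (prefix x n) \<in> T) sequentially"
  unfolding elem_generates_def eventually_sequentially ..

lemma set_generates_eventually:
  "set_generates G C T x \<longleftrightarrow> eventually (\<lambda>n. G C (prefix x n) \<subseteq> T) sequentially"
  unfolding set_generates_def eventually_sequentially ..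

lemma elem_generates_perturb_noisy:
  assumes "element_based G" and "elem_generates_all_clean G"
    and "is_collection C" and "K \<in> C" and "noisy_enum x K"
  shows "elem_generates G (perturb C) K x"
proof -
  have "inj x"
    using assms(5) unfolding noisy_enum_def by blast
  then have "elem_generates G (perturb C) (range x) x"
    using assms(2) is_collection_perturb[OF assms(3)] noisy_enum_range_in_perturb[OF assms(4,5)]
      clean_enum_range
    unfolding elem_generates_all_clean_def by blast
  then have "eventually (\<lambda>n. G (perturb C) (prefix x n) \<in> range x) sequentially"
    unfolding elem_generates_eventually .
  moreover have "eventually (\<lambda>n. G (perturb C) (prefix x n) \<notin> set (prefix x n)) sequentially"
    using eventually_prefix_nonempty[of x]
    by eventually_elim (use assms(1) in \<open>simp add: element_based_def\<close>)
  ultimately show ?thesis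
    unfolding elem_generates_eventually using eventually_noise_in_prefix[OF assms(5)]
    by eventually_elim auto
qed

lemma set_generates_perturb_noisy:
  assumes "set_based G" and "set_generates_all_clean G"
    and "is_collection C" and "K \<in> C" and "noisy_enum x K"
  shows "set_generates G (perturb C) K x"
proof -
  have "inj x"
    using assms(5) unfolding noisy_enum_def by blast
  then have "set_generates G (perturb C) (range x) x"
    using assms(2) is_collection_perturb[OF assms(3)] noisy_enum_range_in_perturb[OF assms(4,5)]
      clean_enum_range
    unfolding set_generates_all_clean_def by blast
  then have "eventually (\<lambda>n. G (perturb C) (prefix x n) \<subseteq> range x) sequentially"
    unfolding set_generates_eventually .
  moreover have "eventually (\<lambda>n. G (perturb C) (prefix x n) \<inter> set (prefix x n) = {}) sequentially"
    using eventually_prefix_nonempty[of x]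
    by eventually_elim (use assms(1) in \<open>simp add: set_based_def\<close>)
  ultimately show ?thesis
    unfolding set_generates_eventually using eventually_noise_in_prefix[OF assms(5)]
    by eventually_elim auto
qed

theorem lemma4p3:
  shows "(\<forall>(G :: collection \<Rightarrow> nat list \<Rightarrow> nat) C K x.
            element_based G \<and> elem_generates_all_clean G \<and> is_collection C \<and> K \<in> C \<and> noisy_enum x K
            \<longrightarrow> elem_generates G (perturb C) K x)
       \<and> (\<forall>(G :: collection \<Rightarrow> nat list \<Rightarrow> nat set) C K x.
            set_based G \<and> set_generates_all_clean G \<and> is_collection C \<and> K \<in> C \<and> noisy_enum x K
            \<longrightarrow> set_generates G (perturb C) K x)"
  by (intro conjI allI impI; elim conjE)
    (simp_all add: elem_generates_perturb_noisy set_generates_perturb_noisy)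

end
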